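(* For each $p\ge1$ and $N\in\mathbb N$ there exists a constant $K_N\in(1,1+\frac1N)$ such that for every $T>0$ $$\mathbb E\Bigl[\Bigl(\sup_{t\in[0,T]}Z^N(t)\Bigr)^p\Bigr]\le (2\mu)^p\exp\{pK_N^{p-1}T\}.$$ In particular, for every $p\ge1$ and $T>0$, $\sup_N\sup_{t\in[0,T]}\mathbb E[(Z^N(t))^p]<\infty$.
   Context: Model. Fix $\tau>0$, $\mu\ge 0$, $N\in\mathbb N$, and write $L=\lfloor \tau N\rfloor$. The state space is $\Omega_N=[0,\infty)^{L+1}$, with elements $x=(x_{-L},\dots,x_0)$. Define $\theta_N^\pm:\Omega_N\to\Omega_N$ by $(\theta_N^\pm x)_j=x_{j+1}$ for $-L\le j<0$, $(\theta_N^+x)_0=x_0(1+\frac1N)$, $(\theta_N^-x)_0=\max\{x_0(1-\frac{x_{-L}}{N^2}),0\}$. Let $\xi^N=(\xi^N(n))_{n\ge0}$ be the discrete-time Markov chain on $\Omega_N$ moving from $x$ to $\theta_N^+x$ or $\theta_N^-x$ with probability $1/2$ each, with $\xi^N_j(0)=\mu N$ for all $j$. Let $(\sigma_n)_{n\ge1}$ be i.i.d. Exp(1), independent of $\xi^N$, $J_0=0$, $J_n=\sigma_1+\dots+\sigma_n$, and $X^N(t)=\xi^N(n)$ for $t\in[J_n,J_{n+1})$. Define $Z^N(t)=X^N_{-L}(Nt)/N$ for $t\ge0$. *)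

theory Defs
  imports "HOL-Probability.Probability"
begin

definition LL :: "real \<Rightarrow> nat \<Rightarrow> nat" where
  "LL \<tau> N = nat \<lfloor>\<tau> * real N\<rfloor>"

text \<open>States x = (x_{-L},...,x_0) are represented as functions int => real;
  only the coordinates -L..0 are meaningful.\<close>
definition theta_plus :: "real \<Rightarrow> nat \<Rightarrow> (int \<Rightarrow> real) \<Rightarrow> (int \<Rightarrow> real)" where
  "theta_plus \<tau> N x = (\<lambda>j. if j < 0 then x (j + 1)
       else if j = 0 then x 0 * (1 + 1 / real N) else 0)"

definition theta_minus :: "real \<Rightarrow> nat \<Rightarrow> (int \<Rightarrow> real) \<Rightarrow> (int \<Rightarrow> real)" where
  "theta_minus \<tau> N x = (\<lambda>j. if j < 0 then x (j + 1)
       else if j = 0 then max (x 0 * (1 - x (- int (LL \<tau> N)) / (real N)\<^sup>2)) 0 else 0)"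

primrec xi :: "real \<Rightarrow> real \<Rightarrow> nat \<Rightarrow> (nat \<Rightarrow> bool) \<Rightarrow> nat \<Rightarrow> (int \<Rightarrow> real)" where
  "xi \<tau> \<mu> N c 0 = (\<lambda>j. if - int (LL \<tau> N) \<le> j \<and> j \<le> 0 then \<mu> * real N else 0)"
| "xi \<tau> \<mu> N c (Suc n) = (if c n then theta_plus \<tau> N (xi \<tau> \<mu> N c n)
                                   else theta_minus \<tau> N (xi \<tau> \<mu> N c n))"

text \<open>Jump times J_n = sigma_1 + ... + sigma_n, where sigma_k is s (k-1).\<close>
definition jump :: "(nat \<Rightarrow> real) \<Rightarrow> nat \<Rightarrow> real" where
  "jump s n = (\<Sum>k<n. s k)"

definition XX :: "real \<Rightarrow> real \<Rightarrow> nat \<Rightarrow> (nat \<Rightarrow> bool) \<times> (nat \<Rightarrow> real) \<Rightarrow> real \<Rightarrow> (int \<Rightarrow> real)" where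
  "XX \<tau> \<mu> N \<omega> t = xi \<tau> \<mu> N (fst \<omega>)
      (THE n. jump (snd \<omega>) n \<le> t \<and> t < jump (snd \<omega>) (Suc n))"

definition ZZ :: "real \<Rightarrow> real \<Rightarrow> nat \<Rightarrow> real \<Rightarrow> (nat \<Rightarrow> bool) \<times> (nat \<Rightarrow> real) \<Rightarrow> real" where
  "ZZ \<tau> \<mu> N t \<omega> = XX \<tau> \<mu> N \<omega> (real N * t) (- int (LL \<tau> N)) / real N"

definition Pspace :: "((nat \<Rightarrow> bool) \<times> (nat \<Rightarrow> real)) measure" where
  "Pspace = (\<Pi>\<^sub>M i\<in>UNIV. measure_pmf (bernoulli_pmf (1/2)))
            \<Otimes>\<^sub>M (\<Pi>\<^sub>M i\<in>UNIV. density lborel (exponential_density 1))"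

end

theory Submission
  imports Defs
begin

text \<open>
  Up-moves multiply the front coordinate by a = 1 + 1/N, down-moves never increase it, and
  otherwise coordinates are only shifted. Hence every
  coordinate of \<xi>(n) lies in [0, \<mu> N a^H(n)], where H(n) is the number of heads among the
  first n coins, and Z(t)^p \<le> \<mu>^p A^H(n) with A = a^p and n the number of jumps up to
  time N t.

  Telescoping A^H(n) = 1 + \<Sum>k<n. (A - 1) [c k] A^H(k) and weighting the k-th increment by
  exp((A - 1)(s - J(k+1))) \<ge> 1 lets the sum run over all k; the resulting majorant no longer
  depends on n, so for s = N T it bounds the supremum over t \<le> T. Coins and holding times
  being independent, its expectation is
  1 + \<Sum>k. (A - 1) e^((A-1)s) (1/2) ((A + 1)/2)^k A^-(k+1) = 1 + e^((A-1)s).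
  Finally (A - 1) N = p K^(p-1) for some K in (1, 1 + 1/N) by the mean value theorem, and
  1 + e^x \<le> 2^p e^x.
\<close>

lemma (in product_prob_space) nn_integral_PiM_prod_components:
  assumes "finite J" "J \<subseteq> I" "\<And>i. i \<in> J \<Longrightarrow> f i \<in> borel_measurable (M i)"
  shows "(\<integral>\<^sup>+x. (\<Prod>i\<in>J. f i (x i)) \<partial>PiM I M) = (\<Prod>i\<in>J. \<integral>\<^sup>+y. f i y \<partial>M i)"
proof -
  have restrict: "(\<lambda>x. restrict x J) \<in> PiM I M \<rightarrow>\<^sub>M PiM J M"
    using assms(2) by (rule measurable_restrict_subset)
  have prod: "(\<lambda>y. \<Prod>i\<in>J. f i (y i)) \<in> borel_measurable (PiM J M)"
    using assms(3) by (intro borel_measurable_prod_ennreal)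
      (auto intro: measurable_compose[OF measurable_component_singleton])
  have "(\<integral>\<^sup>+x. (\<Prod>i\<in>J. f i (x i)) \<partial>PiM I M) = (\<integral>\<^sup>+x. (\<Prod>i\<in>J. f i (restrict x J i)) \<partial>PiM I M)"
    by (intro nn_integral_cong prod.cong) auto
  also have "\<dots> = (\<integral>\<^sup>+y. (\<Prod>i\<in>J. f i (y i)) \<partial>distr (PiM I M) (PiM J M) (\<lambda>x. restrict x J))"
    using restrict prod by (simp add: nn_integral_distr)
  also have "\<dots> = (\<integral>\<^sup>+y. (\<Prod>i\<in>J. f i (y i)) \<partial>PiM J M)"
    using assms(1,2) by (simp add: distr_PiM_restrict_finite)
  also have "\<dots> = (\<Prod>i\<in>J. \<integral>\<^sup>+y. f i y \<partial>M i)"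
    using assms by (intro product_nn_integral_prod) auto
  finally show ?thesis .
qed

lemma nn_integral_pair_measure_mult:
  assumes "sigma_finite_measure M2" "f \<in> borel_measurable M1" "g \<in> borel_measurable M2"
  shows "(\<integral>\<^sup>+z. f (fst z) * g (snd z) \<partial>(M1 \<Otimes>\<^sub>M M2)) = (\<integral>\<^sup>+x. f x \<partial>M1) * (\<integral>\<^sup>+y. g y \<partial>M2)"
proof -
  interpret M2: sigma_finite_measure M2 by fact
  have "(\<integral>\<^sup>+z. f (fst z) * g (snd z) \<partial>(M1 \<Otimes>\<^sub>M M2)) = (\<integral>\<^sup>+x. \<integral>\<^sup>+y. f x * g y \<partial>M2 \<partial>M1)"
    using assms by (subst M2.nn_integral_fst[symmetric]) auto
  also have "\<dots> = (\<integral>\<^sup>+x. f x * (\<integral>\<^sup>+y. g y \<partial>M2) \<partial>M1)"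
    using assms by (intro nn_integral_cong nn_integral_cmult) auto
  also have "\<dots> = (\<integral>\<^sup>+x. f x \<partial>M1) * (\<integral>\<^sup>+y. g y \<partial>M2)"
    using assms by (intro nn_integral_multc) auto
  finally show ?thesis .
qed

lemma nn_integral_exponential_density_exp_neg:
  assumes "0 < r" "0 \<le> l"
  shows "(\<integral>\<^sup>+x. ennreal (exp (- l * x)) \<partial>density lborel (exponential_density r)) = ennreal (r / (r + l))"
proof -
  interpret prob_space "density lborel (exponential_density (r + l))"
    using assms by (intro prob_space_exponential_density) auto
  have total: "(\<integral>\<^sup>+x. ennreal (exponential_density (r + l) x) \<partial>lborel) = 1"
    using emeasure_space_1 by (simp add: emeasure_density)
  have "(\<integral>\<^sup>+x. ennreal (exp (- l * x)) \<partial>density lborel (exponential_density r))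
     = (\<integral>\<^sup>+x. ennreal (r / (r + l)) * ennreal (exponential_density (r + l) x) \<partial>lborel)"
    using assms by (subst nn_integral_density)
      (auto intro!: nn_integral_cong
        simp: exponential_density_def ennreal_mult'[symmetric] exp_add[symmetric] field_simps)
  also have "\<dots> = ennreal (r / (r + l))"
    by (subst nn_integral_cmult) (auto simp: total)
  finally show ?thesis .
qed

lemma prob_space_exponential_1: "prob_space (density lborel (exponential_density 1))"
  by (rule prob_space_exponential_density) simp

lemma nn_integral_bernoulli_half:
  assumes "0 \<le> f True" "0 \<le> f False"
  shows "(\<integral>\<^sup>+b. ennreal (f b) \<partial>measure_pmf (bernoulli_pmf (1/2))) = ennreal ((f True + f False) / 2)"
proof -
  have "(\<integral>\<^sup>+b. ennreal (f b) \<partial>measure_pmf (bernoulli_pmf (1/2)))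
      = ennreal (f True) * ennreal (1/2) + ennreal (f False) * ennreal (1 - 1/2)"
    by (rule nn_integral_bernoulli_pmf) auto
  also have "\<dots> = ennreal (f True * (1/2)) + ennreal (f False * (1 - 1/2))"
    using assms by (simp only: ennreal_mult')
  also have "\<dots> = ennreal ((f True + f False) / 2)"
    using assms ennreal_plus[of "f True / 2" "f False / 2"] by (simp add: add_divide_distrib)
  finally show ?thesis .
qed

lemma ennreal_SUP_powr_le:
  fixes f :: "'a \<Rightarrow> real"
  assumes "S \<noteq> {}" "0 < p" "\<And>t. t \<in> S \<Longrightarrow> 0 \<le> f t" "\<And>t. t \<in> S \<Longrightarrow> ennreal (f t powr p) \<le> B"
  shows "ennreal ((SUP t\<in>S. f t) powr p) \<le> B"
proof (cases B)
  case (real b)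
  have f_le: "f t \<le> b powr (1 / p)" if "t \<in> S" for t
  proof -
    have "f t powr p \<le> b"
      using assms(4)[OF that] real by (simp add: ennreal_le_iff)
    then have "(f t powr p) powr (1 / p) \<le> b powr (1 / p)"
      using assms(2) assms(3)[OF that] by (intro powr_mono2) auto
    then show ?thesis
      using assms(2) assms(3)[OF that] by (simp add: powr_powr)
  qed
  obtain t0 where "t0 \<in> S" using assms(1) by blast
  then have "0 \<le> (SUP t\<in>S. f t)"
    using assms(3) f_le by (meson bdd_aboveI2 cSUP_upper2)
  moreover have "(SUP t\<in>S. f t) \<le> b powr (1 / p)"
    using assms(1) f_le by (rule cSUP_least)
  ultimately have "(SUP t\<in>S. f t) powr p \<le> (b powr (1 / p)) powr p"
    using assms(2) by (intro powr_mono2) auto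
  also have "\<dots> = b"
    using real assms(2) by (simp add: powr_powr)
  finally show ?thesis
    using real by (simp add: ennreal_leI)
qed simp

definition head_weight :: "real \<Rightarrow> (nat \<Rightarrow> bool) \<Rightarrow> nat \<Rightarrow> real" where
  "head_weight a c n = (\<Prod>k<n. if c k then a else 1)"

lemma head_weight_0 [simp]: "head_weight a c 0 = 1"
  by (simp add: head_weight_def)

lemma head_weight_Suc: "head_weight a c (Suc n) = head_weight a c n * (if c n then a else 1)"
  by (simp add: head_weight_def)

lemma head_weight_ge_1: "1 \<le> a \<Longrightarrow> 1 \<le> head_weight a c n"
  unfolding head_weight_def by (intro prod_ge_1) auto

lemma head_weight_mono_Suc: "1 \<le> a \<Longrightarrow> head_weight a c n \<le> head_weight a c (Suc n)"
  using head_weight_ge_1[of a c n] by (simp add: head_weight_Suc mult_le_cancel_left1)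

lemma head_weight_powr: "0 < a \<Longrightarrow> head_weight a c n powr p = head_weight (a powr p) c n"
  unfolding head_weight_def prod_powr_distrib by (intro prod.cong) auto

lemma head_weight_telescope:
  "head_weight a c n = 1 + (\<Sum>k<n. (a - 1) * of_bool (c k) * head_weight a c k)"
  by (induction n) (auto simp: head_weight_Suc algebra_simps)

lemma xi_le_head_weight:
  assumes "0 \<le> \<mu>" "- int (LL \<tau> N) \<le> j" "j \<le> 0"
  shows "0 \<le> xi \<tau> \<mu> N c n j \<and> xi \<tau> \<mu> N c n j \<le> \<mu> * N * head_weight (1 + 1 / N) c n"
  using assms(2,3)
proof (induction n arbitrary: j)
  case 0
  then show ?case using assms(1) by simp
next
  case (Suc n)
  define a where "a = 1 + 1 / real N"
  define B where "B = \<mu> * N * head_weight a c n"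
  have a: "1 \<le> a" unfolding a_def by simp
  have B_le: "B \<le> \<mu> * N * head_weight a c (Suc n)"
    unfolding B_def using assms(1) head_weight_mono_Suc[OF a] by (simp add: mult_left_mono)
  have IH: "0 \<le> xi \<tau> \<mu> N c n i \<and> xi \<tau> \<mu> N c n i \<le> B" if "- int (LL \<tau> N) \<le> i" "i \<le> 0" for i
    using Suc.IH[OF that] unfolding B_def a_def .
  show ?case
  proof (cases "j < 0")
    case True
    then show ?thesis using IH[of "j + 1"] Suc.prems B_le
      by (simp add: theta_plus_def theta_minus_def a_def)
  next
    case False
    then have "j = 0" using Suc.prems by simp
    let ?x0 = "xi \<tau> \<mu> N c n 0" and ?xL = "xi \<tau> \<mu> N c n (- int (LL \<tau> N))"
    have x0: "0 \<le> ?x0" "?x0 \<le> B" and xL: "0 \<le> ?xL" using IH by auto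
    show ?thesis
    proof (cases "c n")
      case True
      have "?x0 * a \<le> B * a" using x0 a by (intro mult_right_mono) auto
      then show ?thesis using True \<open>j = 0\<close> x0 a
        by (simp add: theta_plus_def B_def head_weight_Suc a_def)
    next
      case False
      have "?x0 * (1 - ?xL / (real N)\<^sup>2) \<le> ?x0"
        using x0 xL by (simp add: mult_left_le)
      then show ?thesis using False \<open>j = 0\<close> x0 B_le
        by (simp add: theta_minus_def a_def)
    qed
  qed
qed

text \<open>If no such n exists (t < 0, or t beyond all jump times) the value is unspecified.\<close>

definition jump_index :: "(nat \<Rightarrow> real) \<Rightarrow> real \<Rightarrow> nat" where
  "jump_index \<sigma> t = (THE n. jump \<sigma> n \<le> t \<and> t < jump \<sigma> (Suc n))"

lemma ZZ_eq_xi_jump_index: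
  "ZZ \<tau> \<mu> N t \<omega> = xi \<tau> \<mu> N (fst \<omega>) (jump_index (snd \<omega>) (N * t)) (- int (LL \<tau> N)) / N"
  by (simp add: ZZ_def XX_def jump_index_def)

lemma jump_mono: "(\<And>k. 0 \<le> \<sigma> k) \<Longrightarrow> m \<le> n \<Longrightarrow> jump \<sigma> m \<le> jump \<sigma> n"
  unfolding jump_def by (intro sum_mono2) auto

lemma jump_Suc_le_if_less_jump_index:
  assumes "\<And>k. 0 \<le> \<sigma> k" "0 \<le> t" "k < jump_index \<sigma> t"
  shows "jump \<sigma> (Suc k) \<le> t"
proof (cases "\<exists>n. jump \<sigma> n \<le> t \<and> t < jump \<sigma> (Suc n)")
  case True
  then obtain n where n: "jump \<sigma> n \<le> t" "t < jump \<sigma> (Suc n)" by blast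
  have "m = n" if "jump \<sigma> m \<le> t" "t < jump \<sigma> (Suc m)" for m
    using jump_mono[of \<sigma> "Suc m" n] jump_mono[of \<sigma> "Suc n" m] assms(1) n that
    by (cases m n rule: linorder_cases) auto
  then have "jump_index \<sigma> t = n"
    unfolding jump_index_def using n by blast
  then show ?thesis
    using jump_mono[of \<sigma> "Suc k" n, OF assms(1)] assms(3) n by simp
next
  case False
  have "jump \<sigma> m \<le> t" for m
  proof (induction m)
    case (Suc m)
    then show ?case using False by (meson not_le)
  qed (simp add: jump_def assms(2))
  then show ?thesis .
qed

definition majorant_summand :: "real \<Rightarrow> real \<Rightarrow> nat \<Rightarrow> (nat \<Rightarrow> bool) \<times> (nat \<Rightarrow> real) \<Rightarrow> real" where
  "majorant_summand A s k \<omega> =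
     (A - 1) * of_bool (fst \<omega> k) * head_weight A (fst \<omega>) k * exp ((A - 1) * (s - jump (snd \<omega>) (Suc k)))"

definition head_weight_majorant :: "real \<Rightarrow> real \<Rightarrow> (nat \<Rightarrow> bool) \<times> (nat \<Rightarrow> real) \<Rightarrow> ennreal" where
  "head_weight_majorant A s \<omega> = 1 + (\<Sum>k. ennreal (majorant_summand A s k \<omega>))"

lemma head_weight_le_majorant:
  assumes "1 \<le> A" "\<And>k. k < n \<Longrightarrow> jump \<sigma> (Suc k) \<le> s"
  shows "ennreal (head_weight A c n) \<le> head_weight_majorant A s (c, \<sigma>)"
proof -
  define f where "f k = majorant_summand A s k (c, \<sigma>)" for k
  have f_nonneg: "0 \<le> f k" for k
    unfolding f_def majorant_summand_def using assms(1) head_weight_ge_1[OF assms(1)]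
    by (simp add: order.trans[OF zero_le_one])
  have increment_le: "(A - 1) * of_bool (c k) * head_weight A c k \<le> f k" if "k < n" for k
  proof -
    have "0 \<le> (A - 1) * of_bool (c k) * head_weight A c k"
      using assms(1) head_weight_ge_1[OF assms(1)] by (simp add: order.trans[OF zero_le_one])
    moreover have "1 \<le> exp ((A - 1) * (s - jump \<sigma> (Suc k)))"
      using assms(1) assms(2)[OF that] by simp
    ultimately show ?thesis
      unfolding f_def majorant_summand_def using mult_left_mono by fastforce
  qed
  have "head_weight A c n \<le> 1 + (\<Sum>k<n. f k)"
    using increment_le by (subst head_weight_telescope) (auto intro!: sum_mono)
  then have "ennreal (head_weight A c n) \<le> ennreal (1 + (\<Sum>k<n. f k))"
    by (rule ennreal_leI)
  also have "\<dots> = 1 + (\<Sum>k<n. ennreal (f k))"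
    using f_nonneg by (simp add: ennreal_plus sum_nonneg)
  also have "\<dots> \<le> 1 + (\<Sum>k. ennreal (f k))"
    by (intro add_left_mono sum_le_suminf) auto
  finally show ?thesis
    unfolding head_weight_majorant_def f_def .
qed

abbreviation coin_space :: "(nat \<Rightarrow> bool) measure" where
  "coin_space \<equiv> \<Pi>\<^sub>M i\<in>UNIV. measure_pmf (bernoulli_pmf (1/2))"

abbreviation holding_space :: "(nat \<Rightarrow> real) measure" where
  "holding_space \<equiv> \<Pi>\<^sub>M i\<in>UNIV. density lborel (exponential_density 1)"

lemma nn_integral_coin_head_weight:
  assumes "1 \<le> A"
  shows "(\<integral>\<^sup>+c. ennreal (of_bool (c n) * head_weight A c n) \<partial>coin_space) = ennreal (1/2 * ((A + 1) / 2) ^ n)"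
proof -
  define F where "F k b = (if k = n then of_bool b else if b then A else 1)" for k b
  have F_nonneg: "0 \<le> F k b" for k b
    unfolding F_def using assms by auto
  have "of_bool (c n) * head_weight A c n = (\<Prod>k\<in>{..n}. F k (c k))" for c
  proof -
    have "(\<Prod>k<n. F k (c k)) = head_weight A c n"
      unfolding F_def head_weight_def by (intro prod.cong) auto
    then show ?thesis
      by (simp add: lessThan_Suc_atMost[symmetric] F_def)
  qed
  then have "(\<integral>\<^sup>+c. ennreal (of_bool (c n) * head_weight A c n) \<partial>coin_space)
      = (\<integral>\<^sup>+c. (\<Prod>k\<in>{..n}. ennreal (F k (c k))) \<partial>coin_space)"
    using F_nonneg by (simp add: prod_ennreal)
  also have "\<dots> = (\<Prod>k\<in>{..n}. \<integral>\<^sup>+b. ennreal (F k b) \<partial>measure_pmf (bernoulli_pmf (1/2)))"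
    by (rule product_prob_space.nn_integral_PiM_prod_components[OF product_prob_spaceI])
      (auto simp: prob_space_measure_pmf)
  also have "\<dots> = (\<Prod>k\<in>{..n}. ennreal (if k = n then 1/2 else (A + 1) / 2))"
    by (intro prod.cong refl, subst nn_integral_bernoulli_half[OF F_nonneg F_nonneg]) (simp add: F_def add.commute)
  also have "\<dots> = ennreal (\<Prod>k\<in>{..n}. if k = n then 1/2 else (A + 1) / 2)"
    using assms by (subst prod_ennreal) auto
  also have "\<dots> = ennreal (1/2 * ((A + 1) / 2) ^ n)"
    by (simp add: lessThan_Suc_atMost[symmetric])
  finally show ?thesis .
qed

lemma nn_integral_holding_exp_neg_jump:
  assumes "0 \<le> l"
  shows "(\<integral>\<^sup>+\<sigma>. ennreal (exp (- l * jump \<sigma> m)) \<partial>holding_space) = ennreal ((1 / (1 + l)) ^ m)"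
proof -
  have "ennreal (exp (- l * jump \<sigma> m)) = (\<Prod>k<m. ennreal (exp (- l * \<sigma> k)))" for \<sigma>
    by (simp add: prod_ennreal jump_def sum_distrib_left exp_sum)
  then have "(\<integral>\<^sup>+\<sigma>. ennreal (exp (- l * jump \<sigma> m)) \<partial>holding_space)
      = (\<integral>\<^sup>+\<sigma>. (\<Prod>k<m. ennreal (exp (- l * \<sigma> k))) \<partial>holding_space)"
    by simp
  also have "\<dots> = (\<Prod>k<m. \<integral>\<^sup>+x. ennreal (exp (- l * x)) \<partial>density lborel (exponential_density 1))"
    by (rule product_prob_space.nn_integral_PiM_prod_components[OF product_prob_spaceI])
      (auto simp: prob_space_exponential_1)
  also have "\<dots> = ennreal ((1 / (1 + l)) ^ m)"
    using assms nn_integral_exponential_density_exp_neg[of 1 l] by (simp add: ennreal_power)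
  finally show ?thesis .
qed

lemma prob_space_Pspace: "prob_space Pspace"
  unfolding Pspace_def
  by (intro prob_space_pair prob_space_PiM prob_space_measure_pmf prob_space_exponential_1)

lemma AE_holding_times_nonneg: "AE \<omega> in Pspace. \<forall>k. 0 \<le> snd \<omega> k"
proof -
  interpret pair_sigma_finite coin_space holding_space
    by (intro pair_sigma_finite.intro prob_space_imp_sigma_finite prob_space_PiM
        prob_space_measure_pmf prob_space_exponential_1)
  have "AE x in density lborel (exponential_density 1). 0 \<le> x"
    by (subst AE_density) (auto simp: exponential_density_def not_less)
  then have "AE \<sigma> in holding_space. 0 \<le> \<sigma> k" for k
    by (intro AE_PiM_component prob_space_exponential_1) auto
  then have "AE \<omega> in Pspace. 0 \<le> snd \<omega> k" for k
    unfolding Pspace_def by (intro AE_pair_measure) auto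
  then show ?thesis
    by (simp add: AE_all_countable)
qed

lemma nn_integral_majorant_summand:
  assumes "1 < A"
  shows "(\<integral>\<^sup>+\<omega>. ennreal (majorant_summand A s k \<omega>) \<partial>Pspace)
     = ennreal ((A - 1) * exp ((A - 1) * s) / (2 * A) * ((A + 1) / (2 * A)) ^ k)"
proof -
  let ?coin = "\<lambda>c. ennreal (of_bool (c k) * head_weight A c k)"
  let ?hold = "\<lambda>\<sigma>. ennreal (exp (- (A - 1) * jump \<sigma> (Suc k)))"
  have meas: "(\<lambda>\<omega>. ?coin (fst \<omega>) * ?hold (snd \<omega>)) \<in> borel_measurable Pspace"
    unfolding Pspace_def head_weight_def jump_def by measurable
  have exp_split: "exp ((A - 1) * (s - t)) = exp ((A - 1) * s) * exp (- (A - 1) * t)" for t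
    by (simp add: exp_add[symmetric] algebra_simps)
  have eq: "ennreal (majorant_summand A s k \<omega>)
      = ennreal ((A - 1) * exp ((A - 1) * s)) * (?coin (fst \<omega>) * ?hold (snd \<omega>))" for \<omega>
    using assms head_weight_ge_1[of A "fst \<omega>" k]
    by (simp add: majorant_summand_def exp_split ennreal_mult[symmetric] ac_simps)
  have "(\<integral>\<^sup>+\<omega>. ennreal (majorant_summand A s k \<omega>) \<partial>Pspace)
      = (\<integral>\<^sup>+\<omega>. ennreal ((A - 1) * exp ((A - 1) * s)) * (?coin (fst \<omega>) * ?hold (snd \<omega>)) \<partial>Pspace)"
    by (simp only: eq)
  also have "\<dots> = ennreal ((A - 1) * exp ((A - 1) * s)) * (\<integral>\<^sup>+\<omega>. ?coin (fst \<omega>) * ?hold (snd \<omega>) \<partial>Pspace)"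
    using meas by (rule nn_integral_cmult)
  also have "(\<integral>\<^sup>+\<omega>. ?coin (fst \<omega>) * ?hold (snd \<omega>) \<partial>Pspace)
      = (\<integral>\<^sup>+c. ?coin c \<partial>coin_space) * (\<integral>\<^sup>+\<sigma>. ?hold \<sigma> \<partial>holding_space)"
    unfolding Pspace_def
    by (rule nn_integral_pair_measure_mult)
      (auto intro: prob_space_imp_sigma_finite prob_space_PiM prob_space_exponential_1
        simp: head_weight_def jump_def)
  also have "\<dots> = ennreal (1/2 * ((A + 1) / 2) ^ k) * ennreal ((1 / (1 + (A - 1))) ^ Suc k)"
    using assms nn_integral_coin_head_weight[of A k] nn_integral_holding_exp_neg_jump[of "A - 1" "Suc k"]
    by simp
  also have "ennreal ((A - 1) * exp ((A - 1) * s)) * (ennreal (1/2 * ((A + 1) / 2) ^ k) * ennreal ((1 / (1 + (A - 1))) ^ Suc k))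
      = ennreal ((A - 1) * exp ((A - 1) * s) / (2 * A) * ((A + 1) / (2 * A)) ^ k)"
    using assms by (simp add: ennreal_mult[symmetric] power_divide field_simps)
  finally show ?thesis .
qed

lemma borel_measurable_majorant_summand [measurable]:
  "majorant_summand A s k \<in> borel_measurable Pspace"
  unfolding majorant_summand_def Pspace_def head_weight_def jump_def by measurable

lemma borel_measurable_head_weight_majorant [measurable]:
  "head_weight_majorant A s \<in> borel_measurable Pspace"
  unfolding head_weight_majorant_def by measurable

lemma nn_integral_head_weight_majorant:
  assumes "1 < A"
  shows "(\<integral>\<^sup>+\<omega>. head_weight_majorant A s \<omega> \<partial>Pspace) = ennreal (1 + exp ((A - 1) * s))"
proof -
  interpret prob_space Pspace
    by (rule prob_space_Pspace)
  define r where "r = (A + 1) / (2 * A)"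
  have "(\<lambda>k. (A - 1) * exp ((A - 1) * s) / (2 * A) * r ^ k) sums ((A - 1) * exp ((A - 1) * s) / (2 * A) * (1 / (1 - r)))"
    using assms by (intro sums_mult geometric_sums) (simp add: r_def field_simps)
  also have "(A - 1) * exp ((A - 1) * s) / (2 * A) * (1 / (1 - r)) = exp ((A - 1) * s)"
    using assms by (simp add: r_def field_simps)
  finally have sums: "(\<lambda>k. ennreal ((A - 1) * exp ((A - 1) * s) / (2 * A) * r ^ k)) sums ennreal (exp ((A - 1) * s))"
    using assms by (subst sums_ennreal) (auto simp: r_def)
  have "(\<integral>\<^sup>+\<omega>. head_weight_majorant A s \<omega> \<partial>Pspace)
      = 1 + (\<Sum>k. \<integral>\<^sup>+\<omega>. ennreal (majorant_summand A s k \<omega>) \<partial>Pspace)"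
    unfolding head_weight_majorant_def by (simp add: nn_integral_add nn_integral_suminf emeasure_space_1)
  also have "\<dots> = 1 + ennreal (exp ((A - 1) * s))"
    using sums_unique[OF sums] assms by (simp add: nn_integral_majorant_summand r_def)
  finally show ?thesis
    by (simp add: ennreal_plus)
qed

lemma ZZ_powr_le_majorant:
  assumes "0 < N" "0 \<le> \<mu>" "1 \<le> p" "\<forall>k. 0 \<le> snd \<omega> k" "0 \<le> t" "N * t \<le> s"
  shows "0 \<le> ZZ \<tau> \<mu> N t \<omega> \<and>
    ennreal (ZZ \<tau> \<mu> N t \<omega> powr p) \<le> ennreal (\<mu> powr p) * head_weight_majorant ((1 + 1 / N) powr p) s \<omega>"
proof -
  define n where "n = jump_index (snd \<omega>) (N * t)"
  define a where "a = 1 + 1 / real N"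
  define W where "W = head_weight a (fst \<omega>) n"
  have a: "1 \<le> a" and A: "1 \<le> a powr p"
    using assms(3) by (auto simp: a_def ge_one_powr_ge_zero)
  have W: "1 \<le> W"
    unfolding W_def using head_weight_ge_1[OF a] .
  have Z: "0 \<le> ZZ \<tau> \<mu> N t \<omega>" "ZZ \<tau> \<mu> N t \<omega> \<le> \<mu> * W"
    using xi_le_head_weight[OF assms(2), of \<tau> N "- int (LL \<tau> N)" "fst \<omega>" n] assms(1)
    by (auto simp: ZZ_eq_xi_jump_index n_def W_def a_def divide_le_eq ac_simps)
  have "ZZ \<tau> \<mu> N t \<omega> powr p \<le> (\<mu> * W) powr p"
    using Z assms(3) by (intro powr_mono2) auto
  also have "\<dots> = \<mu> powr p * head_weight (a powr p) (fst \<omega>) n"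
    using assms(2) W a by (simp add: powr_mult W_def head_weight_powr)
  finally have "ennreal (ZZ \<tau> \<mu> N t \<omega> powr p) \<le> ennreal (\<mu> powr p * head_weight (a powr p) (fst \<omega>) n)"
    by (rule ennreal_leI)
  also have "\<dots> = ennreal (\<mu> powr p) * ennreal (head_weight (a powr p) (fst \<omega>) n)"
    using head_weight_ge_1[OF A] by (intro ennreal_mult) (auto intro: order.trans[OF zero_le_one])
  also have "\<dots> \<le> ennreal (\<mu> powr p) * head_weight_majorant (a powr p) s (fst \<omega>, snd \<omega>)"
  proof (intro mult_left_mono head_weight_le_majorant[OF A])
    fix k assume "k < n"
    then have "jump (snd \<omega>) (Suc k) \<le> N * t"
      using assms(4,5) unfolding n_def by (intro jump_Suc_le_if_less_jump_index) auto
    then show "jump (snd \<omega>) (Suc k) \<le> s"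
      using assms(6) by linarith
  qed simp
  finally show ?thesis
    using Z by (simp add: a_def)
qed

lemma nn_integral_mult_majorant:
  assumes "1 < A" "0 \<le> c"
  shows "(\<integral>\<^sup>+\<omega>. ennreal c * head_weight_majorant A s \<omega> \<partial>Pspace) = ennreal (c * (1 + exp ((A - 1) * s)))"
  using assms by (simp add: nn_integral_cmult nn_integral_head_weight_majorant ennreal_mult)

lemma nn_integral_SUP_ZZ_powr_le:
  assumes "0 < N" "0 \<le> \<mu>" "1 \<le> p" "0 \<le> T"
  shows "(\<integral>\<^sup>+\<omega>. ennreal ((SUP t\<in>{0..T}. ZZ \<tau> \<mu> N t \<omega>) powr p) \<partial>Pspace)
    \<le> ennreal (\<mu> powr p * (1 + exp (((1 + 1 / N) powr p - 1) * (N * T))))"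
proof -
  have "(\<integral>\<^sup>+\<omega>. ennreal ((SUP t\<in>{0..T}. ZZ \<tau> \<mu> N t \<omega>) powr p) \<partial>Pspace)
      \<le> (\<integral>\<^sup>+\<omega>. ennreal (\<mu> powr p) * head_weight_majorant ((1 + 1 / N) powr p) (N * T) \<omega> \<partial>Pspace)"
    using AE_holding_times_nonneg
  proof (rule nn_integral_mono_AE[OF eventually_mono])
    fix \<omega> :: "(nat \<Rightarrow> bool) \<times> (nat \<Rightarrow> real)"
    assume "\<forall>k. 0 \<le> snd \<omega> k"
    then have "0 \<le> ZZ \<tau> \<mu> N t \<omega> \<and> ennreal (ZZ \<tau> \<mu> N t \<omega> powr p)
        \<le> ennreal (\<mu> powr p) * head_weight_majorant ((1 + 1 / N) powr p) (N * T) \<omega>" if "t \<in> {0..T}" for t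
      using assms that by (intro ZZ_powr_le_majorant) auto
    then show "ennreal ((SUP t\<in>{0..T}. ZZ \<tau> \<mu> N t \<omega>) powr p)
        \<le> ennreal (\<mu> powr p) * head_weight_majorant ((1 + 1 / N) powr p) (N * T) \<omega>"
      using assms(3,4) by (intro ennreal_SUP_powr_le) auto
  qed
  also have "\<dots> = ennreal (\<mu> powr p * (1 + exp (((1 + 1 / N) powr p - 1) * (N * T))))"
    using assms by (intro nn_integral_mult_majorant) auto
  finally show ?thesis .
qed

lemma nn_integral_ZZ_powr_le:
  assumes "0 < N" "0 \<le> \<mu>" "1 \<le> p" "0 \<le> t"
  shows "(\<integral>\<^sup>+\<omega>. ennreal (ZZ \<tau> \<mu> N t \<omega> powr p) \<partial>Pspace)
    \<le> ennreal (\<mu> powr p * (1 + exp (((1 + 1 / N) powr p - 1) * (N * t))))"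
proof -
  have "(\<integral>\<^sup>+\<omega>. ennreal (ZZ \<tau> \<mu> N t \<omega> powr p) \<partial>Pspace)
      \<le> (\<integral>\<^sup>+\<omega>. ennreal (\<mu> powr p) * head_weight_majorant ((1 + 1 / N) powr p) (N * t) \<omega> \<partial>Pspace)"
    using AE_holding_times_nonneg
    by (rule nn_integral_mono_AE[OF eventually_mono]) (use assms ZZ_powr_le_majorant in blast)
  also have "\<dots> = ennreal (\<mu> powr p * (1 + exp (((1 + 1 / N) powr p - 1) * (N * t))))"
    using assms by (intro nn_integral_mult_majorant) auto
  finally show ?thesis .
qed

lemma one_plus_inverse_powr_mvt:
  fixes N :: nat
  assumes "0 < N" "1 \<le> p"
  shows "\<exists>K. 1 < K \<and> K < 1 + 1 / N \<and> ((1 + 1 / N) powr p - 1) * N = p * K powr (p - 1)"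
proof -
  have "\<exists>K. 1 < K \<and> K < 1 + 1 / N \<and> (1 + 1 / N) powr p - 1 powr p = (1 + 1 / N - 1) * (p * K powr (p - 1))"
    using assms(1) by (intro MVT2 has_real_derivative_powr) auto
  then show ?thesis
    using assms by (auto simp: field_simps)
qed

lemma one_plus_inverse_powr_growth_le:
  fixes N :: nat
  assumes "0 < N" "1 \<le> p"
  shows "((1 + 1 / N) powr p - 1) * N \<le> p * 2 powr (p - 1)"
proof -
  obtain K where K: "1 < K" "K < 1 + 1 / N" "((1 + 1 / N) powr p - 1) * N = p * K powr (p - 1)"
    using one_plus_inverse_powr_mvt[OF assms] by blast
  have "1 / real N \<le> 1"
    using assms(1) by simp
  then have "K powr (p - 1) \<le> 2 powr (p - 1)"
    using K assms(2) by (intro powr_mono2) auto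
  then show ?thesis
    using K(3) assms(2) by simp
qed

lemma powr_one_plus_exp_le:
  fixes \<mu> x :: real
  assumes "0 \<le> \<mu>" "1 \<le> p" "0 \<le> x"
  shows "\<mu> powr p * (1 + exp x) \<le> (2 * \<mu>) powr p * exp x"
proof -
  have "1 + exp x \<le> 2 * exp x"
    using assms(3) by simp
  also have "\<dots> \<le> 2 powr p * exp x"
    using powr_mono[OF assms(2), of 2] by (intro mult_right_mono) auto
  finally have "\<mu> powr p * (1 + exp x) \<le> \<mu> powr p * (2 powr p * exp x)"
    by (intro mult_left_mono) auto
  then show ?thesis
    using assms(1) by (simp add: powr_mult mult_ac)
qed

lemma exists_K_nn_integral_SUP_ZZ_powr_le:
  fixes N :: nat
  assumes "1 \<le> N" "0 \<le> \<mu>" "1 \<le> p"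
  shows "\<exists>K. 1 < K \<and> K < 1 + 1 / N \<and> (\<forall>T > 0.
           (\<integral>\<^sup>+\<omega>. ennreal ((SUP t\<in>{0..T}. ZZ \<tau> \<mu> N t \<omega>) powr p) \<partial>Pspace)
             \<le> ennreal ((2 * \<mu>) powr p * exp (p * K powr (p - 1) * T)))"
proof -
  obtain K where K: "1 < K" "K < 1 + 1 / N" and rate: "((1 + 1 / N) powr p - 1) * N = p * K powr (p - 1)"
    using one_plus_inverse_powr_mvt[of N p] assms by auto
  have "(\<integral>\<^sup>+\<omega>. ennreal ((SUP t\<in>{0..T}. ZZ \<tau> \<mu> N t \<omega>) powr p) \<partial>Pspace)
      \<le> ennreal ((2 * \<mu>) powr p * exp (p * K powr (p - 1) * T))" if "0 < T" for T
  proof -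
    have "(\<integral>\<^sup>+\<omega>. ennreal ((SUP t\<in>{0..T}. ZZ \<tau> \<mu> N t \<omega>) powr p) \<partial>Pspace)
        \<le> ennreal (\<mu> powr p * (1 + exp (p * K powr (p - 1) * T)))"
      using nn_integral_SUP_ZZ_powr_le[of N \<mu> p T \<tau>] assms that by (simp add: mult.assoc[symmetric] rate)
    also have "\<dots> \<le> ennreal ((2 * \<mu>) powr p * exp (p * K powr (p - 1) * T))"
      using assms K that by (intro ennreal_leI powr_one_plus_exp_le) auto
    finally show ?thesis .
  qed
  with K show ?thesis
    by blast
qed

lemma nn_integral_ZZ_powr_le_uniform:
  fixes N :: nat
  assumes "1 \<le> N" "0 \<le> \<mu>" "1 \<le> p" "t \<in> {0..T}"
  shows "(\<integral>\<^sup>+\<omega>. ennreal (ZZ \<tau> \<mu> N t \<omega> powr p) \<partial>Pspace) \<le> ennreal (\<mu> powr p * (1 + exp (p * 2 powr (p - 1) * T)))"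
proof -
  have growth: "((1 + 1 / N) powr p - 1) * (N * t) \<le> p * 2 powr (p - 1) * T"
    using one_plus_inverse_powr_growth_le[of N p] assms
    by (simp add: mult.assoc[symmetric] mult_mono)
  have "(\<integral>\<^sup>+\<omega>. ennreal (ZZ \<tau> \<mu> N t \<omega> powr p) \<partial>Pspace)
      \<le> ennreal (\<mu> powr p * (1 + exp (((1 + 1 / N) powr p - 1) * (N * t))))"
    using assms by (intro nn_integral_ZZ_powr_le) auto
  also have "\<dots> \<le> ennreal (\<mu> powr p * (1 + exp (p * 2 powr (p - 1) * T)))"
    using growth by (intro ennreal_leI mult_left_mono add_left_mono) auto
  finally show ?thesis .
qed

theorem lemma3p2:
  fixes \<tau> \<mu> :: real
  assumes "\<tau> > 0" and "\<mu> \<ge> 0"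
  shows "(\<forall>p::real. p \<ge> 1 \<longrightarrow> (\<forall>N::nat. N \<ge> 1 \<longrightarrow>
            (\<exists>K. 1 < K \<and> K < 1 + 1 / real N \<and>
              (\<forall>T::real. T > 0 \<longrightarrow>
                 (\<integral>\<^sup>+ \<omega>. ennreal ((SUP t\<in>{0..T}. ZZ \<tau> \<mu> N t \<omega>) powr p) \<partial>Pspace)
                   \<le> ennreal ((2 * \<mu>) powr p * exp (p * K powr (p - 1) * T))))))
       \<and> (\<forall>p::real. p \<ge> 1 \<longrightarrow> (\<forall>T::real. T > 0 \<longrightarrow>
            (\<exists>C::real. \<forall>N::nat. N \<ge> 1 \<longrightarrow> (\<forall>t\<in>{0..T}.
               (\<integral>\<^sup>+ \<omega>. ennreal (ZZ \<tau> \<mu> N t \<omega> powr p) \<partial>Pspace) \<le> ennreal C))))"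
  using assms(2) exists_K_nn_integral_SUP_ZZ_powr_le nn_integral_ZZ_powr_le_uniform by blast

end
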